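(* Let $Q$ be a groupoid quantale with base locale $A$ and let $G=\mathcal G(Q)$ be its associated open groupoid. Then $Q$ is a principal quantale if and only if $G$ is an effective equivalence relation.
   Context: Let $A$ be a locale (frame), whose multiplication is $\wedge$. An $A$-$A$-bimodule is a sup-lattice $M$ with actions $(a,m)\mapsto a\triangleright m$ and $(m,a)\mapsto m\triangleleft a$, each preserving arbitrary joins in each variable, such that $1_A\triangleright m=m$, $(a\wedge b)\triangleright m=a\triangleright(b\triangleright m)$, $m\triangleleft 1_A=m$, $m\triangleleft(a\wedge b)=(m\triangleleft a)\triangleleft b$, $(a\triangleright m)\triangleleft b=a\triangleright(m\triangleleft b)$. An $A$-$A$-quantale is such a bimodule $Q$ with an associative multiplication preserving joins in each variable with $(a\triangleright x)y=a\triangleright(xy)$, $(x\triangleleft a)y=x(a\triangleright y)$, $(xy)\triangleleft a=x(y\triangleleft a)$; it is involutive if it has a join-preserving $x\mapsto x^*$ with $x^{**}=x$, $(xy)^*=y^*x^*$, $(a\triangleright(x\triangleleft b))^*=b\triangleright(x^*\triangleleft a)$. $1_Q$ is the top of $Q$. A support is a join-preserving $\varsigma:Q\to A$ with $\varsigma(1_Q)=1_A$, $\varsigma(x)\triangleright y\le xx^*y$, $\varsigma(x)\triangleright x=x$; equivariant if $\varsigma(a\triangleright x)=a\wedge\varsigma(x)$. A based quantal frame is an involutive $A$-$A$-quantale that is a frame with $(a\triangleright x)\wedge y=a\triangleright(x\wedge y)$ and $(x\triangleleft a)\wedge y=(x\wedge y)\triangleleft a$; an equivariantly supported quantal frame is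 one with an equivariant support. It is reflexive if it has a frame homomorphism $\upsilon:Q\to A$ with $\upsilon(a\triangleright1_Q)=a=\upsilon(1_Q\triangleleft a)$. $Q\otimes_AQ$ is the quotient of $Q\otimes Q$ by $x\otimes(a\triangleright y)=(x\triangleleft a)\otimes y$, $\mu_A:Q\otimes_AQ\to Q$ the induced multiplication; $Q$ is multiplicative if the right adjoint of $\mu_A$ preserves joins. Unit laws: $\bigvee_{xy\le a}\upsilon(x)\triangleright y=a$ for all $a$; inverse law: $\upsilon(a)\triangleright1_Q=\bigvee_{xy^*\le a}x\wedge y$ for all $a$. A groupoid quantale is a multiplicative equivariantly supported reflexive based quantal frame satisfying the unit laws and inverse law. Its open groupoid $\mathcal G(Q)$ has $\mathcal O(G_0)=A$, $\mathcal O(G_1)=Q$, $d^*(a)=a\triangleright1_Q$, $i^*(x)=x^*$, $r=d\circ i$, $u^*=\upsilon$, $\mathcal O(G_2)=Q\otimes_AQ$, $m^*(a)=\bigvee_{xy\le a}x\otimes y$. Let $R(Q)=\{x\in Q\mid x1_Q\le x\}$, $L(Q)=\{x^*\mid x\in R(Q)\}$, $T(Q)=R(Q)\cap L(Q)$. A principal quantale is an equivariantly supported quantal frame $Q$ such that $Q\cong R(Q)\otimes_{T(Q)}L(Q)$ in the category of frames (the pushout of the inclusions $T(Q)\to R(Q)$, $T(Q)\to L(Q)$). An open localic groupoid $G$ is an effective equivalence relation if $(G_1,d,r)$ is the kernel pair in the category of locales of the coequalizer $G_0\to G_0/G$ of $d$ and $r$, i.e. the square formed by $d,r$ and two copies of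 $G_0\to G_0/G$ is a pullback. *)

theory Defs
  imports Main
begin

definition frame_type :: "'a::complete_lattice itself \<Rightarrow> bool" where
  "frame_type _ \<longleftrightarrow> (\<forall>(a::'a) S. inf a (Sup S) = Sup ((inf a) ` S))"

definition bimodule :: "('a::complete_lattice \<Rightarrow> 'm::complete_lattice \<Rightarrow> 'm) \<Rightarrow> ('m \<Rightarrow> 'a \<Rightarrow> 'm) \<Rightarrow> bool" where
  "bimodule la ra \<longleftrightarrow>
     (\<forall>S m. la (Sup S) m = Sup ((\<lambda>a. la a m) ` S)) \<and>
     (\<forall>a X. la a (Sup X) = Sup (la a ` X)) \<and>
     (\<forall>X a. ra (Sup X) a = Sup ((\<lambda>m. ra m a) ` X)) \<and>
     (\<forall>m S. ra m (Sup S) = Sup (ra m ` S)) \<and>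
     (\<forall>m. la top m = m) \<and>
     (\<forall>a b m. la (inf a b) m = la a (la b m)) \<and>
     (\<forall>m. ra m top = m) \<and>
     (\<forall>m a b. ra m (inf a b) = ra (ra m a) b) \<and>
     (\<forall>a m b. ra (la a m) b = la a (ra m b))"

definition bi_quantale :: "('a::complete_lattice \<Rightarrow> 'q::complete_lattice \<Rightarrow> 'q) \<Rightarrow> ('q \<Rightarrow> 'a \<Rightarrow> 'q) \<Rightarrow> ('q \<Rightarrow> 'q \<Rightarrow> 'q) \<Rightarrow> bool" where
  "bi_quantale la ra mu \<longleftrightarrow> bimodule la ra \<and>
     (\<forall>x y z. mu (mu x y) z = mu x (mu y z)) \<and>
     (\<forall>X y. mu (Sup X) y = Sup ((\<lambda>x. mu x y) ` X)) \<and>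
     (\<forall>x Y. mu x (Sup Y) = Sup (mu x ` Y)) \<and>
     (\<forall>a x y. mu (la a x) y = la a (mu x y)) \<and>
     (\<forall>x a y. mu (ra x a) y = mu x (la a y)) \<and>
     (\<forall>x y a. ra (mu x y) a = mu x (ra y a))"

definition involutive_bi_quantale ::
  "('a::complete_lattice \<Rightarrow> 'q::complete_lattice \<Rightarrow> 'q) \<Rightarrow> ('q \<Rightarrow> 'a \<Rightarrow> 'q) \<Rightarrow> ('q \<Rightarrow> 'q \<Rightarrow> 'q) \<Rightarrow> ('q \<Rightarrow> 'q) \<Rightarrow> bool" where
  "involutive_bi_quantale la ra mu iv \<longleftrightarrow> bi_quantale la ra mu \<and>
     (\<forall>X. iv (Sup X) = Sup (iv ` X)) \<and>
     (\<forall>x. iv (iv x) = x) \<and>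
     (\<forall>x y. iv (mu x y) = mu (iv y) (iv x)) \<and>
     (\<forall>a x b. iv (la a (ra x b)) = la b (ra (iv x) a))"

definition based_quantal_frame ::
  "('a::complete_lattice \<Rightarrow> 'q::complete_lattice \<Rightarrow> 'q) \<Rightarrow> ('q \<Rightarrow> 'a \<Rightarrow> 'q) \<Rightarrow> ('q \<Rightarrow> 'q \<Rightarrow> 'q) \<Rightarrow> ('q \<Rightarrow> 'q) \<Rightarrow> bool" where
  "based_quantal_frame la ra mu iv \<longleftrightarrow>
     frame_type TYPE('a) \<and> frame_type TYPE('q) \<and> involutive_bi_quantale la ra mu iv \<and>
     (\<forall>a x y. inf (la a x) y = la a (inf x y)) \<and>
     (\<forall>x a y. inf (ra x a) y = ra (inf x y) a)"

definition is_support ::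
  "('a::complete_lattice \<Rightarrow> 'q::complete_lattice \<Rightarrow> 'q) \<Rightarrow> ('q \<Rightarrow> 'q \<Rightarrow> 'q) \<Rightarrow> ('q \<Rightarrow> 'q) \<Rightarrow> ('q \<Rightarrow> 'a) \<Rightarrow> bool" where
  "is_support la mu iv s \<longleftrightarrow>
     (\<forall>X. s (Sup X) = Sup (s ` X)) \<and> s top = top \<and>
     (\<forall>x y. la (s x) y \<le> mu (mu x (iv x)) y) \<and>
     (\<forall>x. la (s x) x = x)"

definition equivariant_support ::
  "('a::complete_lattice \<Rightarrow> 'q::complete_lattice \<Rightarrow> 'q) \<Rightarrow> ('q \<Rightarrow> 'q \<Rightarrow> 'q) \<Rightarrow> ('q \<Rightarrow> 'q) \<Rightarrow> ('q \<Rightarrow> 'a) \<Rightarrow> bool" where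
  "equivariant_support la mu iv s \<longleftrightarrow> is_support la mu iv s \<and> (\<forall>a x. s (la a x) = inf a (s x))"

definition eq_supported_quantal_frame ::
  "('a::complete_lattice \<Rightarrow> 'q::complete_lattice \<Rightarrow> 'q) \<Rightarrow> ('q \<Rightarrow> 'a \<Rightarrow> 'q) \<Rightarrow> ('q \<Rightarrow> 'q \<Rightarrow> 'q) \<Rightarrow> ('q \<Rightarrow> 'q) \<Rightarrow> ('q \<Rightarrow> 'a) \<Rightarrow> bool" where
  "eq_supported_quantal_frame la ra mu iv s \<longleftrightarrow>
     based_quantal_frame la ra mu iv \<and> equivariant_support la mu iv s"

definition reflexive_map ::
  "('a::complete_lattice \<Rightarrow> 'q::complete_lattice \<Rightarrow> 'q) \<Rightarrow> ('q \<Rightarrow> 'a \<Rightarrow> 'q) \<Rightarrow> ('q \<Rightarrow> 'a) \<Rightarrow> bool" where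
  "reflexive_map la ra u \<longleftrightarrow>
     (\<forall>X. u (Sup X) = Sup (u ` X)) \<and> (\<forall>x y. u (inf x y) = inf (u x) (u y)) \<and> u top = top \<and>
     (\<forall>a. u (la a top) = a \<and> u (ra top a) = a)"

text \<open>Q \<otimes> Q (sup-lattice tensor product) is represented by its bimorphism ideals
  (down-closed subsets of Q \<times> Q closed under joins in each coordinate); the quotient
  Q \<otimes>_A Q by x \<otimes> (a acting on y) = (x acted on by a) \<otimes> y is the set of those ideals
  saturated for these relations.\<close>
definition tensorA :: "('a::complete_lattice \<Rightarrow> 'q::complete_lattice \<Rightarrow> 'q) \<Rightarrow> ('q \<Rightarrow> 'a \<Rightarrow> 'q) \<Rightarrow> ('q \<times> 'q) set set" where
  "tensorA la ra = {U.
     (\<forall>x y x' y'. (x, y) \<in> U \<longrightarrow> x' \<le> x \<longrightarrow> y' \<le> y \<longrightarrow> (x', y') \<in> U) \<and>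
     (\<forall>S y. (\<forall>s\<in>S. (s, y) \<in> U) \<longrightarrow> (Sup S, y) \<in> U) \<and>
     (\<forall>x S. (\<forall>s\<in>S. (x, s) \<in> U) \<longrightarrow> (x, Sup S) \<in> U) \<and>
     (\<forall>x a y. (x, la a y) \<in> U \<longleftrightarrow> (ra x a, y) \<in> U)}"

definition tensorA_Sup :: "('a::complete_lattice \<Rightarrow> 'q::complete_lattice \<Rightarrow> 'q) \<Rightarrow> ('q \<Rightarrow> 'a \<Rightarrow> 'q) \<Rightarrow> ('q \<times> 'q) set set \<Rightarrow> ('q \<times> 'q) set" where
  "tensorA_Sup la ra W = \<Inter> {U \<in> tensorA la ra. \<Union> W \<subseteq> U}"

definition muA :: "('q::complete_lattice \<Rightarrow> 'q \<Rightarrow> 'q) \<Rightarrow> ('q \<times> 'q) set \<Rightarrow> 'q" where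
  "muA mu U = Sup {mu x y | x y. (x, y) \<in> U}"

definition muA_radj :: "('a::complete_lattice \<Rightarrow> 'q::complete_lattice \<Rightarrow> 'q) \<Rightarrow> ('q \<Rightarrow> 'a \<Rightarrow> 'q) \<Rightarrow> ('q \<Rightarrow> 'q \<Rightarrow> 'q) \<Rightarrow> 'q \<Rightarrow> ('q \<times> 'q) set" where
  "muA_radj la ra mu z = tensorA_Sup la ra {U \<in> tensorA la ra. muA mu U \<le> z}"

definition multiplicative :: "('a::complete_lattice \<Rightarrow> 'q::complete_lattice \<Rightarrow> 'q) \<Rightarrow> ('q \<Rightarrow> 'a \<Rightarrow> 'q) \<Rightarrow> ('q \<Rightarrow> 'q \<Rightarrow> 'q) \<Rightarrow> bool" where
  "multiplicative la ra mu \<longleftrightarrow>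
     (\<forall>Z. muA_radj la ra mu (Sup Z) = tensorA_Sup la ra (muA_radj la ra mu ` Z))"

definition unit_laws :: "('a::complete_lattice \<Rightarrow> 'q::complete_lattice \<Rightarrow> 'q) \<Rightarrow> ('q \<Rightarrow> 'q \<Rightarrow> 'q) \<Rightarrow> ('q \<Rightarrow> 'a) \<Rightarrow> bool" where
  "unit_laws la mu u \<longleftrightarrow> (\<forall>a. Sup {la (u x) y | x y. mu x y \<le> a} = a)"

definition inverse_law :: "('a::complete_lattice \<Rightarrow> 'q::complete_lattice \<Rightarrow> 'q) \<Rightarrow> ('q \<Rightarrow> 'q \<Rightarrow> 'q) \<Rightarrow> ('q \<Rightarrow> 'q) \<Rightarrow> ('q \<Rightarrow> 'a) \<Rightarrow> bool" where
  "inverse_law la mu iv u \<longleftrightarrow> (\<forall>a. la (u a) top = Sup {inf x y | x y. mu x (iv y) \<le> a})"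

definition groupoid_quantale ::
  "('a::complete_lattice \<Rightarrow> 'q::complete_lattice \<Rightarrow> 'q) \<Rightarrow> ('q \<Rightarrow> 'a \<Rightarrow> 'q) \<Rightarrow> ('q \<Rightarrow> 'q \<Rightarrow> 'q) \<Rightarrow> ('q \<Rightarrow> 'q) \<Rightarrow> ('q \<Rightarrow> 'a) \<Rightarrow> ('q \<Rightarrow> 'a) \<Rightarrow> bool" where
  "groupoid_quantale la ra mu iv s u \<longleftrightarrow>
     eq_supported_quantal_frame la ra mu iv s \<and> reflexive_map la ra u \<and>
     multiplicative la ra mu \<and> unit_laws la mu u \<and> inverse_law la mu iv u"

text \<open>Given frame homomorphisms f : B \<rightarrow> C and g : B \<rightarrow> D (frames given as subframes
  B, C, D of complete lattices), the frame pushout C \<otimes>_B D is constructed as the frame of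
  C\<oplus>D-ideals (down-closed subsets of C \<times> D closed under joins in each coordinate)
  that are saturated for the relations (c \<sqinter> f b) \<otimes> d = c \<otimes> (d \<sqinter> g b).\<close>
definition pushout_ideals ::
  "'b set \<Rightarrow> 'c::complete_lattice set \<Rightarrow> 'd::complete_lattice set \<Rightarrow> ('b \<Rightarrow> 'c) \<Rightarrow> ('b \<Rightarrow> 'd) \<Rightarrow> ('c \<times> 'd) set set" where
  "pushout_ideals B C D f g = {U. U \<subseteq> C \<times> D \<and>
     (\<forall>c d c' d'. (c, d) \<in> U \<longrightarrow> c' \<in> C \<longrightarrow> d' \<in> D \<longrightarrow> c' \<le> c \<longrightarrow> d' \<le> d \<longrightarrow> (c', d') \<in> U) \<and>
     (\<forall>S d. S \<subseteq> C \<longrightarrow> d \<in> D \<longrightarrow> (\<forall>s\<in>S. (s, d) \<in> U) \<longrightarrow> (Sup S, d) \<in> U) \<and>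
     (\<forall>c S. c \<in> C \<longrightarrow> S \<subseteq> D \<longrightarrow> (\<forall>s\<in>S. (c, s) \<in> U) \<longrightarrow> (c, Sup S) \<in> U) \<and>
     (\<forall>b c d. b \<in> B \<longrightarrow> c \<in> C \<longrightarrow> d \<in> D \<longrightarrow> ((inf c (f b), d) \<in> U \<longleftrightarrow> (c, inf d (g b)) \<in> U))}"

text \<open>The commutative square (f, g; h, k) with h : C \<rightarrow> E, k : D \<rightarrow> E is a pushout of frames
  iff the canonical comparison map C \<otimes>_B D \<rightarrow> E is an isomorphism (bijective frame map).\<close>
definition is_frame_pushout ::
  "'b set \<Rightarrow> 'c::complete_lattice set \<Rightarrow> 'd::complete_lattice set \<Rightarrow> 'e::complete_lattice set \<Rightarrow>
   ('b \<Rightarrow> 'c) \<Rightarrow> ('b \<Rightarrow> 'd) \<Rightarrow> ('c \<Rightarrow> 'e) \<Rightarrow> ('d \<Rightarrow> 'e) \<Rightarrow> bool" where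
  "is_frame_pushout B C D E f g h k \<longleftrightarrow>
     (\<forall>b\<in>B. h (f b) = k (g b)) \<and>
     bij_betw (\<lambda>U. Sup {inf (h c) (k d) | c d. (c, d) \<in> U}) (pushout_ideals B C D f g) E"

definition Rset :: "('q::complete_lattice \<Rightarrow> 'q \<Rightarrow> 'q) \<Rightarrow> 'q set" where
  "Rset mu = {x. mu x top \<le> x}"

definition Lset :: "('q::complete_lattice \<Rightarrow> 'q \<Rightarrow> 'q) \<Rightarrow> ('q \<Rightarrow> 'q) \<Rightarrow> 'q set" where
  "Lset mu iv = iv ` Rset mu"

definition Tset :: "('q::complete_lattice \<Rightarrow> 'q \<Rightarrow> 'q) \<Rightarrow> ('q \<Rightarrow> 'q) \<Rightarrow> 'q set" where
  "Tset mu iv = Rset mu \<inter> Lset mu iv"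

definition principal_quantale ::
  "('a::complete_lattice \<Rightarrow> 'q::complete_lattice \<Rightarrow> 'q) \<Rightarrow> ('q \<Rightarrow> 'a \<Rightarrow> 'q) \<Rightarrow> ('q \<Rightarrow> 'q \<Rightarrow> 'q) \<Rightarrow> ('q \<Rightarrow> 'q) \<Rightarrow> bool" where
  "principal_quantale la ra mu iv \<longleftrightarrow>
     (\<exists>s. eq_supported_quantal_frame la ra mu iv s) \<and>
     is_frame_pushout (Tset mu iv) (Rset mu) (Lset mu iv) (UNIV :: 'q set) id id id id"

text \<open>Inverse images of the domain and range maps of G(Q): d^*(a) = a acting on top, r^* = i^* \<circ> d^*.\<close>
definition gq_d :: "('a::complete_lattice \<Rightarrow> 'q::complete_lattice \<Rightarrow> 'q) \<Rightarrow> 'a \<Rightarrow> 'q" where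
  "gq_d la a = la a top"

definition gq_r :: "('a::complete_lattice \<Rightarrow> 'q::complete_lattice \<Rightarrow> 'q) \<Rightarrow> ('q \<Rightarrow> 'q) \<Rightarrow> 'a \<Rightarrow> 'q" where
  "gq_r la iv a = iv (gq_d la a)"

text \<open>For locale maps d, r : G_1 \<rightarrow> G_0 given by frame homomorphisms dstar, rstar : O(G_0) \<rightarrow> O(G_1):
  the coequalizer G_0 \<rightarrow> G_0/G of d, r in locales is the equalizer of dstar, rstar in frames,
  i.e. the subframe {a. dstar a = rstar a} of O(G_0) with its inclusion; the kernel-pair square is
  a pullback of locales iff the corresponding square of frames is a pushout.\<close>
definition coequalizer_frame :: "('a \<Rightarrow> 'q) \<Rightarrow> ('a \<Rightarrow> 'q) \<Rightarrow> 'a set" where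
  "coequalizer_frame dstar rstar = {a. dstar a = rstar a}"

definition effective_equivalence_relation ::
  "('a::complete_lattice \<Rightarrow> 'q::complete_lattice) \<Rightarrow> ('a \<Rightarrow> 'q) \<Rightarrow> bool" where
  "effective_equivalence_relation dstar rstar \<longleftrightarrow>
     is_frame_pushout (coequalizer_frame dstar rstar) (UNIV :: 'a set) (UNIV :: 'a set) (UNIV :: 'q set)
       id id dstar rstar"

end

theory Submission
  imports Defs
begin

(* Both d\<^sup>* = (- \<rhd> 1) and r\<^sup>* = (1 \<lhd> -) are injective frame maps A \<rightarrow> Q, since u is a
   left inverse of each, and the support identifies their images with R(Q) and L(Q). An element
   of R(Q) \<inter> L(Q) is a \<rhd> 1 = 1 \<lhd> b, and applying u gives a = b, so T(Q) is the image of the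
   coequalizer frame {a. d\<^sup>* a = r\<^sup>* a}. Transporting ideals along d\<^sup>* \<times> r\<^sup>* then identifies
   the pushout of A \<leftarrow> A/G \<rightarrow> A with that of R(Q) \<leftarrow> T(Q) \<rightarrow> L(Q), compatibly with the comparison
   maps into Q, so one square is a pushout exactly when the other is. *)

lemma mono_if_Sup_preserving:
  fixes h :: "'a::complete_lattice \<Rightarrow> 'b::complete_lattice"
  assumes "\<And>X. h (Sup X) = Sup (h ` X)"
  shows "mono h"
proof (rule monoI)
  fix x y :: 'a
  assume "x \<le> y"
  then have "h y = h (Sup {x, y})" by (simp add: sup.absorb2)
  also have "\<dots> = sup (h x) (h y)" using assms[of "{x, y}"] by simp
  finally show "h x \<le> h y" by (metis sup.cobounded1)
qed

locale inf_Sup_embedding =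
  fixes e :: "'a::complete_lattice \<Rightarrow> 'b::complete_lattice"
  assumes inj: "inj e"
    and map_inf: "e (inf x y) = inf (e x) (e y)"
    and map_Sup: "e (Sup X) = Sup (e ` X)"
begin

lemma le_iff: "e x \<le> e y \<longleftrightarrow> x \<le> y"
  by (metis inf.absorb_iff1 map_inf inj injD)

lemma Sup_range_subset:
  assumes "S \<subseteq> range e"
  shows "Sup S = e (Sup (e -` S))"
  using assms by (simp add: map_Sup image_vimage_eq inf.absorb1)

end

locale coinciding_embeddings =
  f: inf_Sup_embedding f + g: inf_Sup_embedding g for f g +
  fixes E
  assumes coincide: "b \<in> E \<Longrightarrow> f b = g b"
begin

lemma image_mem_pushout_ideals:
  assumes U: "U \<in> pushout_ideals E UNIV UNIV id id"
  shows "map_prod f g ` U \<in> pushout_ideals (f ` E) (range f) (range g) id id"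
proof -
  let ?V = "map_prod f g ` U"
  have mem: "(f x, g y) \<in> ?V \<longleftrightarrow> (x, y) \<in> U" for x y
    using f.inj g.inj by (auto dest: injD)
  from U have
    down: "\<And>x y x' y'. (x, y) \<in> U \<Longrightarrow> x' \<le> x \<Longrightarrow> y' \<le> y \<Longrightarrow> (x', y') \<in> U" and
    Sup1: "\<And>S y. \<forall>x\<in>S. (x, y) \<in> U \<Longrightarrow> (Sup S, y) \<in> U" and
    Sup2: "\<And>x S. \<forall>y\<in>S. (x, y) \<in> U \<Longrightarrow> (x, Sup S) \<in> U" and
    sat: "\<And>b x y. b \<in> E \<Longrightarrow> (inf x b, y) \<in> U \<longleftrightarrow> (x, inf y b) \<in> U"
    unfolding pushout_ideals_def by auto
  show ?thesis
    unfolding pushout_ideals_def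
  proof (intro CollectI conjI allI impI)
    show "?V \<subseteq> range f \<times> range g" by auto
  next
    fix c d c' d'
    assume "(c, d) \<in> ?V" "c' \<in> range f" "d' \<in> range g" "c' \<le> c" "d' \<le> d"
    then show "(c', d') \<in> ?V"
      using down mem f.le_iff g.le_iff by auto
  next
    fix S d
    assume S: "S \<subseteq> range f" and "d \<in> range g" and S_d: "\<forall>s\<in>S. (s, d) \<in> ?V"
    then obtain y where d: "d = g y" by auto
    have "\<forall>x\<in>f -` S. (x, y) \<in> U"
    proof
      fix x
      assume "x \<in> f -` S"
      with S_d have "(f x, g y) \<in> ?V" unfolding d by blast
      then show "(x, y) \<in> U" by (simp only: mem)
    qed
    then have "(Sup (f -` S), y) \<in> U" by (rule Sup1)
    then show "(Sup S, d) \<in> ?V"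
      using mem d f.Sup_range_subset[OF S] by simp
  next
    fix c S
    assume "c \<in> range f" and S: "S \<subseteq> range g" and c_S: "\<forall>s\<in>S. (c, s) \<in> ?V"
    then obtain x where c: "c = f x" by auto
    have "\<forall>y\<in>g -` S. (x, y) \<in> U"
    proof
      fix y
      assume "y \<in> g -` S"
      with c_S have "(f x, g y) \<in> ?V" unfolding c by blast
      then show "(x, y) \<in> U" by (simp only: mem)
    qed
    then have "(x, Sup (g -` S)) \<in> U" by (rule Sup2)
    then show "(c, Sup S) \<in> ?V"
      using mem c g.Sup_range_subset[OF S] by simp
  next
    fix b c d
    assume "b \<in> f ` E" "c \<in> range f" "d \<in> range g"
    then obtain b0 x y where b0: "b0 \<in> E" "b = f b0" and c: "c = f x" and d: "d = g y"
      by auto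
    then have meets: "inf (f x) (id b) = f (inf x b0)" "inf (g y) (id b) = g (inf y b0)"
      by (simp_all add: f.map_inf g.map_inf coincide)
    show "(inf c (id b), d) \<in> ?V \<longleftrightarrow> (c, inf d (id b)) \<in> ?V"
      unfolding c d meets mem by (rule sat[OF b0(1)])
  qed
qed

lemma vimage_mem_pushout_ideals:
  assumes V: "V \<in> pushout_ideals (f ` E) (range f) (range g) id id"
  shows "map_prod f g -` V \<in> pushout_ideals E UNIV UNIV id id"
proof -
  let ?U = "map_prod f g -` V"
  from V have
    down: "\<And>x y x' y'. (f x, g y) \<in> V \<Longrightarrow> f x' \<le> f x \<Longrightarrow> g y' \<le> g y \<Longrightarrow> (f x', g y') \<in> V" and
    Sup1: "\<And>S y. \<forall>x\<in>S. (f x, g y) \<in> V \<Longrightarrow> (Sup (f ` S), g y) \<in> V" and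
    Sup2: "\<And>x S. \<forall>y\<in>S. (f x, g y) \<in> V \<Longrightarrow> (f x, Sup (g ` S)) \<in> V" and
    sat: "\<And>b x y. b \<in> E \<Longrightarrow> (inf (f x) (f b), g y) \<in> V \<longleftrightarrow> (f x, inf (g y) (f b)) \<in> V"
    unfolding pushout_ideals_def by (auto simp: image_subset_iff)
  show ?thesis
    unfolding pushout_ideals_def
  proof (intro CollectI conjI allI impI)
    show "?U \<subseteq> UNIV \<times> UNIV" by simp
  next
    fix c d c' d' :: 'a
    assume "(c, d) \<in> ?U" "c' \<le> c" "d' \<le> d"
    then show "(c', d') \<in> ?U"
      using down f.le_iff g.le_iff by simp
  next
    fix S d
    assume "\<forall>s\<in>S. (s, d) \<in> ?U"
    then show "(Sup S, d) \<in> ?U"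
      using Sup1 by (simp add: f.map_Sup)
  next
    fix c S
    assume "\<forall>s\<in>S. (c, s) \<in> ?U"
    then show "(c, Sup S) \<in> ?U"
      using Sup2 by (simp add: g.map_Sup)
  next
    fix b c d
    assume "b \<in> E"
    then show "(inf c (id b), d) \<in> ?U \<longleftrightarrow> (c, inf d (id b)) \<in> ?U"
      using sat by (simp add: f.map_inf g.map_inf coincide)
  qed
qed

lemma bij_betw_image_pushout_ideals:
  "bij_betw (image (map_prod f g)) (pushout_ideals E UNIV UNIV id id)
     (pushout_ideals (f ` E) (range f) (range g) id id)"
proof (rule bij_betw_byWitness[where f' = "vimage (map_prod f g)"])
  have "inj (map_prod f g)"
    using map_prod_inj_on[OF f.inj g.inj] by simp
  then show "\<forall>U\<in>pushout_ideals E UNIV UNIV id id. map_prod f g -` map_prod f g ` U = U"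
    by (simp add: inj_vimage_image_eq)
  have "V \<subseteq> range (map_prod f g)" if "V \<in> pushout_ideals (f ` E) (range f) (range g) id id" for V
    using that unfolding pushout_ideals_def by (auto simp: map_prod_surj_on)
  then show "\<forall>V\<in>pushout_ideals (f ` E) (range f) (range g) id id. map_prod f g ` map_prod f g -` V = V"
    by (simp add: image_vimage_eq inf.absorb1)
qed (use image_mem_pushout_ideals vimage_mem_pushout_ideals in auto)

lemma is_frame_pushout_image_iff:
  "is_frame_pushout (f ` E) (range f) (range g) Z id id id id \<longleftrightarrow>
   is_frame_pushout E UNIV UNIV Z id id f g"
proof -
  have comparison:
    "(\<lambda>V. Sup {inf (id c) (id d) |c d. (c, d) \<in> V}) \<circ> image (map_prod f g) =
     (\<lambda>U. Sup {inf (f c) (g d) |c d. (c, d) \<in> U})"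
    by (fastforce intro!: arg_cong[where f = Sup])
  have "bij_betw (\<lambda>V. Sup {inf (id c) (id d) |c d. (c, d) \<in> V})
      (pushout_ideals (f ` E) (range f) (range g) id id) Z \<longleftrightarrow>
    bij_betw (\<lambda>U. Sup {inf (f c) (g d) |c d. (c, d) \<in> U}) (pushout_ideals E UNIV UNIV id id) Z"
    using bij_betw_comp_iff[OF bij_betw_image_pushout_ideals,
        where f' = "\<lambda>V. Sup {inf (id c) (id d) |c d. (c, d) \<in> V}" and A'' = Z]
    unfolding comparison .
  moreover have "\<forall>b\<in>E. f (id b) = g (id b)"
    using coincide by simp
  ultimately show ?thesis
    unfolding is_frame_pushout_def by blast
qed

end

context
  fixes la :: "'a::complete_lattice \<Rightarrow> 'q::complete_lattice \<Rightarrow> 'q"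
    and ra :: "'q \<Rightarrow> 'a \<Rightarrow> 'q"
    and mu :: "'q \<Rightarrow> 'q \<Rightarrow> 'q"
    and iv :: "'q \<Rightarrow> 'q"
begin

lemma involution_top:
  assumes "involutive_bi_quantale la ra mu iv"
  shows "iv top = top"
proof -
  from assms have "mono iv" and "iv (iv top) = top"
    unfolding involutive_bi_quantale_def by (auto intro: mono_if_Sup_preserving)
  then show ?thesis by (metis monoD top.extremum top.extremum_unique)
qed

lemma gq_r_eq_right_action:
  assumes "involutive_bi_quantale la ra mu iv"
  shows "gq_r la iv = ra top"
proof (rule ext)
  fix a
  from assms have "iv (la a (ra top top)) = la top (ra (iv top) a)" and "bimodule la ra"
    unfolding involutive_bi_quantale_def bi_quantale_def by auto
  then show "gq_r la iv a = ra top a"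
    unfolding gq_r_def gq_d_def bimodule_def by (simp add: involution_top[OF assms])
qed

lemma gq_d_embedding:
  assumes "based_quantal_frame la ra mu iv" and "reflexive_map la ra u"
  shows "inf_Sup_embedding (gq_d la)"
proof
  from assms(2) show "inj (gq_d la)"
    unfolding reflexive_map_def gq_d_def by (metis injI)
  from assms(1) have "bimodule la ra" and
    inf_la: "\<And>a x y. inf (la a x) y = la a (inf x y)"
    unfolding based_quantal_frame_def involutive_bi_quantale_def bi_quantale_def by auto
  then show "gq_d la (inf a b) = inf (gq_d la a) (gq_d la b)"
    and "gq_d la (Sup X) = Sup (gq_d la ` X)" for a b X
    unfolding gq_d_def bimodule_def by (simp_all add: image_image)
qed

lemma gq_r_embedding:
  assumes "based_quantal_frame la ra mu iv" and "reflexive_map la ra u"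
  shows "inf_Sup_embedding (gq_r la iv)"
proof -
  from assms(1) have inv: "involutive_bi_quantale la ra mu iv" and "bimodule la ra" and
    inf_ra: "\<And>x a y. inf (ra x a) y = ra (inf x y) a"
    unfolding based_quantal_frame_def involutive_bi_quantale_def bi_quantale_def by auto
  have "inf_Sup_embedding (ra top)"
  proof
    from assms(2) show "inj (ra top)"
      unfolding reflexive_map_def by (metis injI)
    from \<open>bimodule la ra\<close> inf_ra
    show "ra top (inf a b) = inf (ra top a) (ra top b)"
      and "ra top (Sup X) = Sup (ra top ` X)" for a b X
      unfolding bimodule_def by (simp_all add: inf.commute)
  qed
  then show ?thesis
    using gq_r_eq_right_action[OF inv] by simp
qed

text \<open>The support retracts every right-sided element x onto s x \<rhd> 1, since
  s x \<rhd> 1 \<le> x (iv x) 1 \<le> x 1 \<le> x and x = s x \<rhd> x \<le> s x \<rhd> 1.\<close>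
lemma Rset_eq_range_gq_d:
  assumes "bi_quantale la ra mu" and "is_support la mu iv s"
  shows "Rset mu = range (gq_d la)"
proof -
  from assms(1) have "bimodule la ra" and
    mu_assoc: "\<And>x y z. mu (mu x y) z = mu x (mu y z)" and
    mu_la: "\<And>a x y. mu (la a x) y = la a (mu x y)" and
    mono_mu: "\<And>x. mono (mu x)"
    unfolding bi_quantale_def by (auto intro: mono_if_Sup_preserving)
  then have mono_la: "\<And>a. mono (la a)"
    unfolding bimodule_def by (auto intro: mono_if_Sup_preserving)
  from assms(2) have s_le: "\<And>x y. la (s x) y \<le> mu (mu x (iv x)) y"
    and s_fix: "\<And>x. la (s x) x = x"
    unfolding is_support_def by auto
  have "x = gq_d la (s x)" if "mu x top \<le> x" for x
  proof (rule antisym)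
    show "x \<le> gq_d la (s x)"
      unfolding gq_d_def using monoD[OF mono_la, of x top "s x"] s_fix by simp
    have "gq_d la (s x) \<le> mu x (mu (iv x) top)"
      unfolding gq_d_def using s_le mu_assoc by metis
    also have "\<dots> \<le> mu x top" by (rule monoD[OF mono_mu]) simp
    finally show "gq_d la (s x) \<le> x" using that by simp
  qed
  moreover have "mu (gq_d la a) top \<le> gq_d la a" for a
    unfolding gq_d_def mu_la by (rule monoD[OF mono_la]) simp
  ultimately show ?thesis
    unfolding Rset_def by auto
qed

lemma Lset_eq_range_gq_r:
  assumes "bi_quantale la ra mu" and "is_support la mu iv s"
  shows "Lset mu iv = range (gq_r la iv)"
  unfolding Lset_def Rset_eq_range_gq_d[OF assms] gq_r_def by auto

lemma Tset_eq_image_coequalizer_frame: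
  assumes inv: "involutive_bi_quantale la ra mu iv" and supp: "is_support la mu iv s"
    and refl: "reflexive_map la ra u"
  shows "Tset mu iv = gq_d la ` coequalizer_frame (gq_d la) (gq_r la iv)"
proof -
  from inv have bq: "bi_quantale la ra mu"
    unfolding involutive_bi_quantale_def by simp
  from refl have "a = b" if "gq_d la a = gq_r la iv b" for a b
    using that unfolding reflexive_map_def gq_d_def gq_r_eq_right_action[OF inv] by metis
  then show ?thesis
    unfolding Tset_def Rset_eq_range_gq_d[OF bq supp] Lset_eq_range_gq_r[OF bq supp]
      coequalizer_frame_def
    by auto (metis rangeI)
qed

end

theorem theorem5p16:
  fixes la :: "'a::complete_lattice \<Rightarrow> 'q::complete_lattice \<Rightarrow> 'q"
    and ra :: "'q \<Rightarrow> 'a \<Rightarrow> 'q"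
    and mu :: "'q \<Rightarrow> 'q \<Rightarrow> 'q"
    and iv :: "'q \<Rightarrow> 'q"
    and s :: "'q \<Rightarrow> 'a"
    and u :: "'q \<Rightarrow> 'a"
  assumes "groupoid_quantale la ra mu iv s u"
  shows "principal_quantale la ra mu iv \<longleftrightarrow>
         effective_equivalence_relation (gq_d la) (gq_r la iv)"
proof -
  from assms have eqs: "eq_supported_quantal_frame la ra mu iv s"
    and refl: "reflexive_map la ra u"
    unfolding groupoid_quantale_def by auto
  then have bqf: "based_quantal_frame la ra mu iv" and supp: "is_support la mu iv s"
    unfolding eq_supported_quantal_frame_def equivariant_support_def by auto
  then have inv: "involutive_bi_quantale la ra mu iv"
    unfolding based_quantal_frame_def by simp
  then have bq: "bi_quantale la ra mu"
    unfolding involutive_bi_quantale_def by simp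
  define E where "E = coequalizer_frame (gq_d la) (gq_r la iv)"
  interpret coinciding_embeddings "gq_d la" "gq_r la iv" E
    using gq_d_embedding[OF bqf refl] gq_r_embedding[OF bqf refl]
    by (intro coinciding_embeddings.intro coinciding_embeddings_axioms.intro)
      (simp_all add: E_def coequalizer_frame_def)
  have "principal_quantale la ra mu iv \<longleftrightarrow>
    is_frame_pushout (Tset mu iv) (Rset mu) (Lset mu iv) UNIV id id id id"
    using eqs unfolding principal_quantale_def by blast
  also have "\<dots> \<longleftrightarrow>
    is_frame_pushout (gq_d la ` E) (range (gq_d la)) (range (gq_r la iv)) UNIV id id id id"
    unfolding Tset_eq_image_coequalizer_frame[OF inv supp refl] Rset_eq_range_gq_d[OF bq supp]
      Lset_eq_range_gq_r[OF bq supp] E_def ..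
  also have "\<dots> \<longleftrightarrow> effective_equivalence_relation (gq_d la) (gq_r la iv)"
    unfolding effective_equivalence_relation_def E_def[symmetric] by (rule is_frame_pushout_image_iff)
  finally show ?thesis .
qed

end
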